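(* Let $U$ be a Hilbert space, $T: U\rightrightarrows U$, $(\hat u,\hat w)\in\operatorname{graph}T$, and $P,N,M\in\mathcal{L}(U;U)$ with $M\ge0$ and $M\ge P$. Let $\alpha>0$, and if $\alpha\in(0,1)$ suppose $(M,M-P)\in\mathcal{P}(T^{-1}(\hat w),\hat u)$. Then $T$ is $(P,N,M)$-partially subregular at $(\hat u,\hat w)$ if it is $(\alpha P,\alpha N,M)$-partially subregular there. Conversely, if $(M,M-\alpha P)\in\mathcal{P}(T^{-1}(\hat w),\hat u)$ in case $\alpha>1$, then $T$ is $(\alpha P,\alpha N,M)$-partially subregular at $(\hat u,\hat w)$ if it is $(P,N,M)$-partially subregular there. In particular, if $(M,M-\max\{\alpha,1\}P)\in\mathcal{P}(T^{-1}(\hat w),\hat u)$, the two properties are equivalent.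
   Context: For $T\in\mathcal{L}(U;U)$ (not necessarily positive): $\|x\|^2_T:=\langle Tx,x\rangle$, $\operatorname{dist}^2_T(z,A):=\inf_{u\in A}\|z-u\|^2_T$ ($\inf\emptyset=+\infty$); $T\ge S$ means $T-S$ positive semidefinite. For $M,P,N\in\mathcal{L}(U;U)$ with $N\ge0$, $M\ge0$, $M\ge P$, $T$ is $(P,N,M)$-partially subregular at $(\hat u,\hat w)$ if there is a neighbourhood $\mathcal{U}\ni\hat u$ with $\operatorname{dist}^2_N(\hat w,T(u)) + \operatorname{dist}^2_{M-P}(u,T^{-1}(\hat w))\ge\operatorname{dist}^2_M(u,T^{-1}(\hat w))$ for all $u\in\mathcal{U}$. For $M,M'\in\mathcal{L}(U;U)$, $A\subset U$, $\hat u\in A$: $(M,M')\in\mathcal{P}(A,\hat u)$ means there is a neighbourhood $\mathcal{U}'\ni\hat u$ such that each $u\in\mathcal{U}'$ has a common projection onto $A$ with respect to $\|\cdot\|_M$ and $\|\cdot\|_{M'}$ (a point of $A$ minimising both $\|u-\cdot\|_M$ and $\|u-\cdot\|_{M'}$ over $A$). *)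

theory Defs
  imports "HOL-Analysis.Analysis"
begin

definition opsq :: "('a::real_inner \<Rightarrow> 'a) \<Rightarrow> 'a \<Rightarrow> real" where
  "opsq T x = inner (T x) x"

definition op_psd :: "('a::real_inner \<Rightarrow> 'a) \<Rightarrow> bool" where
  "op_psd T \<longleftrightarrow> (\<forall>x. 0 \<le> opsq T x)"

definition op_ge :: "('a::real_inner \<Rightarrow> 'a) \<Rightarrow> ('a \<Rightarrow> 'a) \<Rightarrow> bool" where
  "op_ge T S \<longleftrightarrow> op_psd (\<lambda>x. T x - S x)"

text \<open>Squared distance w.r.t. T, with inf of the empty set = +infinity.\<close>
definition opdist2 :: "('a::real_inner \<Rightarrow> 'a) \<Rightarrow> 'a \<Rightarrow> 'a set \<Rightarrow> ereal" where
  "opdist2 T z A = (INF u\<in>A. ereal (opsq T (z - u)))"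

definition op_minus :: "('a::real_vector \<Rightarrow> 'a) \<Rightarrow> ('a \<Rightarrow> 'a) \<Rightarrow> 'a \<Rightarrow> 'a" where
  "op_minus T S = (\<lambda>x. T x - S x)"

definition op_scale :: "real \<Rightarrow> ('a::real_vector \<Rightarrow> 'a) \<Rightarrow> 'a \<Rightarrow> 'a" where
  "op_scale c T = (\<lambda>x. c *\<^sub>R T x)"

definition sv_inv :: "('a \<Rightarrow> 'b set) \<Rightarrow> 'b \<Rightarrow> 'a set" where
  "sv_inv T w = {u. w \<in> T u}"

text \<open>(P,N,M)-partial subregularity of T at (uh,wh): the defining inequality on a
  neighbourhood of uh.  The standing conditions N \<ge> 0, M \<ge> 0, M \<ge> P are stated
  separately where needed.\<close>
definition partially_subregular ::
  "('a::real_inner \<Rightarrow> 'a set) \<Rightarrow> ('a \<Rightarrow> 'a) \<Rightarrow> ('a \<Rightarrow> 'a) \<Rightarrow> ('a \<Rightarrow> 'a) \<Rightarrow> 'a \<Rightarrow> 'a \<Rightarrow> bool" where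
  "partially_subregular T P N M uh wh \<longleftrightarrow>
     (\<exists>V. open V \<and> uh \<in> V \<and>
        (\<forall>u\<in>V. opdist2 N wh (T u) + opdist2 (op_minus M P) u (sv_inv T wh)
                 \<ge> opdist2 M u (sv_inv T wh)))"

text \<open>(M,M') \<in> \<P>(A,uh): near uh every point has a common projection onto A
  w.r.t. the (squared) M- and M'-distances.\<close>
definition common_proj ::
  "('a::real_inner \<Rightarrow> 'a) \<Rightarrow> ('a \<Rightarrow> 'a) \<Rightarrow> 'a set \<Rightarrow> 'a \<Rightarrow> bool" where
  "common_proj M M' A uh \<longleftrightarrow>
     (\<exists>V. open V \<and> uh \<in> V \<and>
        (\<forall>u\<in>V. \<exists>p\<in>A. (\<forall>v\<in>A. opsq M (u - p) \<le> opsq M (u - v))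
                      \<and> (\<forall>v\<in>A. opsq M' (u - p) \<le> opsq M' (u - v))))"

end

theory Submission
  imports Defs
begin

text \<open>Fix \<open>u\<close> and, for \<open>v\<close> in \<open>A = T\<^sup>-\<^sup>1(wh)\<close>, write \<open>m v = |u - v|\<^sup>2\<^sub>M\<close> and
  \<open>p v = |u - v|\<^sup>2\<^sub>P\<close>; let \<open>c = inf m\<close> and \<open>d = dist\<^sup>2\<^sub>N(wh, T u)\<close>. Subregularity with the pair
  \<open>(a P, a N)\<close> at \<open>u\<close> says \<open>c \<le> a d + m v - a p v\<close> for every \<open>v \<in> A\<close>. Passing to a smaller
  scale \<open>b \<le> a\<close> is a convex combination of this bound with \<open>c \<le> m v\<close>. Passing to a larger
  scale needs a point \<open>v\<^sub>0\<close> minimising both \<open>m\<close> and \<open>m - b p\<close>: there the bound reads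
  \<open>p v\<^sub>0 \<le> d\<close>, which spreads to every \<open>v\<close> by the minimality of \<open>v\<^sub>0\<close> for \<open>m - b p\<close>.\<close>

lemma INF_ereal_cmult:
  fixes f :: "'b \<Rightarrow> real"
  assumes "0 < c"
  shows "(INF i\<in>S. ereal (c * f i)) = ereal c * (INF i\<in>S. ereal (f i))"
  using ereal_Inf_cmult[OF assms, of "\<lambda>x. x \<in> (\<lambda>i. ereal (f i)) ` S"]
  by (simp add: setcompr_eq_image image_image)

lemma ereal_le_add_INF_iff:
  fixes g :: "'b \<Rightarrow> real"
  shows "ereal c \<le> ereal d + (INF v\<in>A. ereal (g v)) \<longleftrightarrow> (\<forall>v\<in>A. c \<le> d + g v)"
proof -
  have "ereal c \<le> ereal d + (INF v\<in>A. ereal (g v)) \<longleftrightarrow> ereal (c - d) \<le> (INF v\<in>A. ereal (g v))"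
    by (cases "INF v\<in>A. ereal (g v)") auto
  also have "\<dots> \<longleftrightarrow> (\<forall>v\<in>A. c \<le> d + g v)"
    by (auto simp: le_INF_iff)
  finally show ?thesis .
qed

lemma rescaled_pointwise_bound:
  fixes m p :: "'b \<Rightarrow> real"
  assumes "0 < a" "0 < b"
    and lower: "\<forall>v\<in>A. c \<le> m v"
    and scale: "b \<le> a \<or> (\<exists>v\<^sub>0\<in>A. m v\<^sub>0 \<le> c \<and> (\<forall>v\<in>A. m v\<^sub>0 - b * p v\<^sub>0 \<le> m v - b * p v))"
    and bound: "\<forall>v\<in>A. c \<le> a * d + (m v - a * p v)"
  shows "\<forall>v\<in>A. c \<le> b * d + (m v - b * p v)"
  using scale
proof
  assume "b \<le> a"
  define t where "t = b / a"
  have t: "0 \<le> t" "t \<le> 1" "b = t * a"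
    using \<open>0 < a\<close> \<open>0 < b\<close> \<open>b \<le> a\<close> by (auto simp: t_def)
  show ?thesis
  proof
    fix v assume "v \<in> A"
    have "t * c \<le> t * (a * d + (m v - a * p v))"
      using bound \<open>v \<in> A\<close> t by (intro mult_left_mono) auto
    moreover have "(1 - t) * c \<le> (1 - t) * m v"
      using lower \<open>v \<in> A\<close> t by (intro mult_left_mono) auto
    ultimately show "c \<le> b * d + (m v - b * p v)"
      using t by (simp add: algebra_simps)
  qed
next
  assume "\<exists>v\<^sub>0\<in>A. m v\<^sub>0 \<le> c \<and> (\<forall>v\<in>A. m v\<^sub>0 - b * p v\<^sub>0 \<le> m v - b * p v)"
  then obtain v\<^sub>0 where v\<^sub>0: "v\<^sub>0 \<in> A" "m v\<^sub>0 \<le> c" "\<forall>v\<in>A. m v\<^sub>0 - b * p v\<^sub>0 \<le> m v - b * p v"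
    by blast
  have "a * p v\<^sub>0 \<le> a * d"
    using bound v\<^sub>0 by force
  then have "b * p v\<^sub>0 \<le> b * d"
    using \<open>0 < a\<close> \<open>0 < b\<close> by simp
  then show ?thesis
    using v\<^sub>0 lower by force
qed

lemma rescaled_INF_bound:
  fixes m p :: "'b \<Rightarrow> real" and D :: ereal
  assumes "0 < a" "0 < b" "A \<noteq> {}"
    and nonneg: "\<forall>v\<in>A. 0 \<le> m v"
    and scale: "b \<le> a \<or> (\<exists>v\<^sub>0\<in>A. (\<forall>v\<in>A. m v\<^sub>0 \<le> m v) \<and> (\<forall>v\<in>A. m v\<^sub>0 - b * p v\<^sub>0 \<le> m v - b * p v))"
    and bound: "(INF v\<in>A. ereal (m v)) \<le> ereal a * D + (INF v\<in>A. ereal (m v - a * p v))"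
  shows "(INF v\<in>A. ereal (m v)) \<le> ereal b * D + (INF v\<in>A. ereal (m v - b * p v))"
proof -
  obtain w where "w \<in> A"
    using \<open>A \<noteq> {}\<close> by blast
  have "0 \<le> (INF v\<in>A. ereal (m v))"
    using nonneg by (auto intro: INF_greatest)
  moreover have "(INF v\<in>A. ereal (m v)) \<le> ereal (m w)"
    using \<open>w \<in> A\<close> by (rule INF_lower)
  ultimately obtain c where c: "(INF v\<in>A. ereal (m v)) = ereal c"
    by (cases "INF v\<in>A. ereal (m v)") auto
  have lower: "\<forall>v\<in>A. c \<le> m v"
    using c by (metis INF_lower ereal_less_eq(3))
  have scale': "b \<le> a \<or> (\<exists>v\<^sub>0\<in>A. m v\<^sub>0 \<le> c \<and> (\<forall>v\<in>A. m v\<^sub>0 - b * p v\<^sub>0 \<le> m v - b * p v))"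
    using scale c by (metis INF_greatest ereal_less_eq(3))
  show ?thesis
  proof (cases D)
    case (real d)
    have "\<forall>v\<in>A. c \<le> a * d + (m v - a * p v)"
      using bound c real by (simp add: ereal_le_add_INF_iff)
    then have "\<forall>v\<in>A. c \<le> b * d + (m v - b * p v)"
      using rescaled_pointwise_bound[OF \<open>0 < a\<close> \<open>0 < b\<close> lower scale'] by blast
    then show ?thesis
      using c real by (simp add: ereal_le_add_INF_iff)
  next
    case PInf
    then show ?thesis
      using \<open>0 < b\<close> by simp
  next
    case MInf
    \<comment> \<open>possible, as \<open>N\<close> need not be positive; excluded because \<open>c\<close> is finite\<close>
    have "(INF v\<in>A. ereal (m v - a * p v)) \<le> ereal (m w - a * p w)"
      using \<open>w \<in> A\<close> by (rule INF_lower)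
    then have "ereal a * D + (INF v\<in>A. ereal (m v - a * p v)) = -\<infinity>"
      using MInf \<open>0 < a\<close> by auto
    with bound c have "ereal c \<le> -\<infinity>"
      by simp
    then show ?thesis
      by simp
  qed
qed

lemma opsq_op_minus [simp]: "opsq (op_minus M P) x = opsq M x - opsq P x"
  by (simp add: opsq_def op_minus_def inner_diff_left)

lemma opsq_op_scale [simp]: "opsq (op_scale c P) x = c * opsq P x"
  by (simp add: opsq_def op_scale_def)

lemma op_scale_one [simp]: "op_scale 1 T = T"
  by (simp add: op_scale_def)

lemma opdist2_op_scale: "0 < a \<Longrightarrow> opdist2 (op_scale a N) z S = ereal a * opdist2 N z S"
  by (simp add: opdist2_def INF_ereal_cmult)

lemma partially_subregular_rescale:
  assumes "wh \<in> T uh" "op_psd M" "0 < a" "0 < b"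
    and scale: "b \<le> a \<or> common_proj M (op_minus M (op_scale b P)) (sv_inv T wh) uh"
    and subreg: "partially_subregular T (op_scale a P) (op_scale a N) M uh wh"
  shows "partially_subregular T (op_scale b P) (op_scale b N) M uh wh"
proof -
  let ?A = "sv_inv T wh"
  obtain V where V: "open V" "uh \<in> V" and ineq: "\<forall>u\<in>V. opdist2 (op_scale a N) wh (T u)
      + opdist2 (op_minus M (op_scale a P)) u ?A \<ge> opdist2 M u ?A"
    using subreg unfolding partially_subregular_def by blast
  obtain W where W: "open W" "uh \<in> W" and proj: "\<forall>u\<in>W. b \<le> a \<or> (\<exists>p\<in>?A.
      (\<forall>v\<in>?A. opsq M (u - p) \<le> opsq M (u - v)) \<and>
      (\<forall>v\<in>?A. opsq (op_minus M (op_scale b P)) (u - p) \<le> opsq (op_minus M (op_scale b P)) (u - v)))"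
    using scale unfolding common_proj_def by (metis open_UNIV UNIV_I)
  have "?A \<noteq> {}"
    using \<open>wh \<in> T uh\<close> by (auto simp: sv_inv_def)
  have "opdist2 M u ?A \<le> opdist2 (op_scale b N) wh (T u) + opdist2 (op_minus M (op_scale b P)) u ?A"
    if "u \<in> V \<inter> W" for u
  proof -
    have "(INF v\<in>?A. ereal (opsq M (u - v)))
        \<le> ereal a * opdist2 N wh (T u) + (INF v\<in>?A. ereal (opsq M (u - v) - a * opsq P (u - v)))"
      using ineq that \<open>0 < a\<close> by (simp add: opdist2_op_scale opdist2_def[of M] opdist2_def[of "op_minus M _"])
    moreover have "b \<le> a \<or> (\<exists>v\<^sub>0\<in>?A. (\<forall>v\<in>?A. opsq M (u - v\<^sub>0) \<le> opsq M (u - v))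
        \<and> (\<forall>v\<in>?A. opsq M (u - v\<^sub>0) - b * opsq P (u - v\<^sub>0) \<le> opsq M (u - v) - b * opsq P (u - v)))"
      using proj that by auto
    ultimately have "(INF v\<in>?A. ereal (opsq M (u - v)))
        \<le> ereal b * opdist2 N wh (T u) + (INF v\<in>?A. ereal (opsq M (u - v) - b * opsq P (u - v)))"
      using rescaled_INF_bound[OF \<open>0 < a\<close> \<open>0 < b\<close> \<open>?A \<noteq> {}\<close>] \<open>op_psd M\<close>
      by (simp add: op_psd_def)
    then show ?thesis
      using \<open>0 < b\<close> by (simp add: opdist2_op_scale opdist2_def[of M] opdist2_def[of "op_minus M _"])
  qed
  then show ?thesis
    unfolding partially_subregular_def using V W by (intro exI[of _ "V \<inter> W"]) auto
qed

theorem lemma4p7: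
  fixes T :: "'a::{real_inner, complete_space} \<Rightarrow> 'a set"
    and P N M :: "'a \<Rightarrow> 'a"
    and uh wh :: 'a
    and \<alpha> :: real
  assumes graph: "wh \<in> T uh"
    and linP: "bounded_linear P" and linN: "bounded_linear N" and linM: "bounded_linear M"
    and Mpos: "op_psd M" and MP: "op_ge M P"
    and alpha: "\<alpha> > 0"
  shows "((\<alpha> < 1 \<longrightarrow> common_proj M (op_minus M P) (sv_inv T wh) uh) \<longrightarrow>
            (partially_subregular T (op_scale \<alpha> P) (op_scale \<alpha> N) M uh wh
               \<longrightarrow> partially_subregular T P N M uh wh))
       \<and> ((\<alpha> > 1 \<longrightarrow> common_proj M (op_minus M (op_scale \<alpha> P)) (sv_inv T wh) uh) \<longrightarrow>
            (partially_subregular T P N M uh wh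
               \<longrightarrow> partially_subregular T (op_scale \<alpha> P) (op_scale \<alpha> N) M uh wh))
       \<and> (common_proj M (op_minus M (op_scale (max \<alpha> 1) P)) (sv_inv T wh) uh \<longrightarrow>
            (partially_subregular T P N M uh wh
               \<longleftrightarrow> partially_subregular T (op_scale \<alpha> P) (op_scale \<alpha> N) M uh wh))"
proof -
  \<comment> \<open>only \<open>M \<ge> 0\<close> is used\<close>
  have down: "partially_subregular T (op_scale \<alpha> P) (op_scale \<alpha> N) M uh wh
      \<Longrightarrow> partially_subregular T P N M uh wh"
    if "1 \<le> \<alpha> \<or> common_proj M (op_minus M P) (sv_inv T wh) uh"
    using partially_subregular_rescale[where a=\<alpha> and b=1 and P=P and N=N] graph Mpos alpha that by simp
  have up: "partially_subregular T P N M uh wh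
      \<Longrightarrow> partially_subregular T (op_scale \<alpha> P) (op_scale \<alpha> N) M uh wh"
    if "\<alpha> \<le> 1 \<or> common_proj M (op_minus M (op_scale \<alpha> P)) (sv_inv T wh) uh"
    using partially_subregular_rescale[where a=1 and b=\<alpha> and P=P and N=N] graph Mpos alpha that by simp
  show ?thesis
    using down up by (cases "\<alpha> \<le> 1") (auto simp: max_def)
qed

end
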